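(* Let $R$ be a diagonally convex polyomino with at least three diagonals, let $m$ be the largest index $n$ such that $R$ has a cell on the $n$-th diagonal, and let $Q$ be the set of cells of $R$ not on the $m$-th diagonal. Then exactly one connected component (under edge-adjacency) of $Q$ has cells on at least two diagonals, this component is a diagonally convex polyomino, and every other connected component of $Q$ consists of a single cell lying on the $(m-1)$-th diagonal.
   Context: A cell is a closed unit square $[i,i+1]\times[j,j+1]$ with $i,j\in\mathbb{Z}$; we identify it with $(i,j)$; two cells are edge-adjacent if they share an edge. A polyomino is a finite nonempty set of cells connected under edge-adjacency. The $n$-th diagonal is the set of cells $(i,j)$ with $i+j=n$. A polyomino is diagonally convex if for every $n$ its cells on the $n$-th diagonal are of the form $(i,n-i)$ with $i$ ranging over an interval of integers. The number of diagonals of a polyomino is the number of $n$ for which it has a cell on the $n$-th diagonal. *)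

theory Defs
  imports Main
begin

text \<open>A cell (i,j) stands for the unit square [i,i+1] x [j,j+1].\<close>
type_synonym cell = "int \<times> int"

definition edge_adj :: "cell \<Rightarrow> cell \<Rightarrow> bool" where
  "edge_adj a b \<longleftrightarrow> \<bar>fst a - fst b\<bar> + \<bar>snd a - snd b\<bar> = 1"

definition diag :: "cell \<Rightarrow> int" where
  "diag c = fst c + snd c"

definition reach_in :: "cell set \<Rightarrow> cell \<Rightarrow> cell \<Rightarrow> bool" where
  "reach_in S = (\<lambda>x y. x \<in> S \<and> y \<in> S \<and> edge_adj x y)\<^sup>*\<^sup>*"

definition cells_connected :: "cell set \<Rightarrow> bool" where
  "cells_connected S \<longleftrightarrow> (\<forall>a\<in>S. \<forall>b\<in>S. reach_in S a b)"

definition polyomino :: "cell set \<Rightarrow> bool" where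
  "polyomino S \<longleftrightarrow> finite S \<and> S \<noteq> {} \<and> cells_connected S"

definition is_component :: "cell set \<Rightarrow> cell set \<Rightarrow> bool" where
  "is_component Q C \<longleftrightarrow> (\<exists>a\<in>Q. C = {b \<in> Q. reach_in Q a b})"

definition diag_convex :: "cell set \<Rightarrow> bool" where
  "diag_convex S \<longleftrightarrow>
     (\<forall>n i j k. (i, n - i) \<in> S \<longrightarrow> (k, n - k) \<in> S \<longrightarrow> i \<le> j \<longrightarrow> j \<le> k
        \<longrightarrow> (j, n - j) \<in> S)"

definition num_diagonals :: "cell set \<Rightarrow> nat" where
  "num_diagonals S = card (diag ` S)"

end

theory Submission
  imports Defs
begin

text \<open>
  Neighbouring cells lie on consecutive diagonals, so a cell of the second-highest diagonal
  \<open>m - 1\<close> has neighbours in \<open>Q\<close> only on diagonal \<open>m - 2\<close>. Two cells of diagonal \<open>m - 1\<close> that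
  both have a neighbour on diagonal \<open>m - 2\<close> are joined in \<open>Q\<close> by a staircase running between the
  two diagonals, which exists by diagonal convexity. Hence a path in \<open>R\<close> between cells of
  diagonals \<open>\<le> m - 2\<close> can be rerouted around every excursion to diagonal \<open>m\<close>, so all these cells
  lie in one component of \<open>Q\<close>. Every other component consists of cells of diagonal \<open>m - 1\<close>
  without neighbours in \<open>Q\<close>, i.e. of a single cell; the staircase also shows that the big
  component is convex on diagonal \<open>m - 1\<close>.
\<close>

lemma edge_adj_sym: "edge_adj a b \<Longrightarrow> edge_adj b a"
  unfolding edge_adj_def by arith

lemma edge_adj_diag: "edge_adj a b \<Longrightarrow> diag b = diag a + 1 \<or> diag b = diag a - 1"
  unfolding edge_adj_def diag_def by arith

lemma cell_by_diag: "c = (fst c, diag c - fst c)"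
  by (simp add: diag_def)

lemma reach_in_refl: "reach_in S x x"
  by (simp add: reach_in_def)

lemma reach_in_step:
  "reach_in S x y \<Longrightarrow> y \<in> S \<Longrightarrow> z \<in> S \<Longrightarrow> edge_adj y z \<Longrightarrow> reach_in S x z"
  unfolding reach_in_def by (rule rtranclp.rtrancl_into_rtrancl) auto

lemma reach_in_trans: "reach_in S x y \<Longrightarrow> reach_in S y z \<Longrightarrow> reach_in S x z"
  unfolding reach_in_def by (rule rtranclp_trans)

lemma reach_in_sym: "reach_in S x y \<Longrightarrow> reach_in S y x"
  unfolding reach_in_def
proof (induction rule: rtranclp_induct)
  case (step y z)
  then show ?case
    using edge_adj_sym[of y z] by (auto intro: converse_rtranclp_into_rtranclp)
qed simp

lemma reach_in_last_step:
  "reach_in S x y \<Longrightarrow> x \<noteq> y \<Longrightarrow> \<exists>w\<in>S. y \<in> S \<and> edge_adj w y \<and> reach_in S x w"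
  unfolding reach_in_def by (erule rtranclp.cases) auto

lemma reach_in_first_step:
  "reach_in S x y \<Longrightarrow> x \<noteq> y \<Longrightarrow> \<exists>w\<in>S. x \<in> S \<and> edge_adj x w \<and> reach_in S w y"
  unfolding reach_in_def by (erule converse_rtranclpE) auto

lemma component_eq:
  "reach_in S a x \<Longrightarrow> {b \<in> S. reach_in S x b} = {b \<in> S. reach_in S a b}"
  using reach_in_trans reach_in_sym by blast

lemma reach_in_component:
  assumes "reach_in S a b"
  shows "reach_in {c \<in> S. reach_in S a c} a b"
  using assms[unfolded reach_in_def]
proof (induction rule: rtranclp_induct)
  case base
  then show ?case by (simp add: reach_in_refl)
next
  case (step y z)
  then have "reach_in S a y" "reach_in S a z"
    by (auto simp: reach_in_def intro: rtranclp.rtrancl_into_rtrancl)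
  with step show ?case
    by (auto intro: reach_in_step)
qed

lemma cells_connected_component: "cells_connected {b \<in> S. reach_in S a b}"
  unfolding cells_connected_def
proof (intro ballI)
  fix x y
  assume x: "x \<in> {b \<in> S. reach_in S a b}" and y: "y \<in> {b \<in> S. reach_in S a b}"
  then have "reach_in S x y"
    using reach_in_trans reach_in_sym by blast
  then show "reach_in {b \<in> S. reach_in S a b} x y"
    using reach_in_component[of S x y] component_eq[of S a x] x by simp
qed

lemma component_of_isolated:
  assumes "a \<in> S" "\<And>w. w \<in> S \<Longrightarrow> \<not> edge_adj a w"
  shows "{b \<in> S. reach_in S a b} = {a}"
proof -
  have "b = a" if "reach_in S a b" for b
    using reach_in_first_step[OF that] assms(2) by blast
  then show ?thesis
    using assms(1) reach_in_refl by blast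
qed

lemma num_diagonals_singleton: "num_diagonals {c} = 1"
  by (simp add: num_diagonals_def)

lemma num_diagonals_ge_2:
  assumes "finite C" "a \<in> C" "b \<in> C" "diag a \<noteq> diag b"
  shows "num_diagonals C \<ge> 2"
proof -
  have "card {diag a, diag b} \<le> card (diag ` C)"
    using assms by (intro card_mono) auto
  then show ?thesis
    using assms(4) by (simp add: num_diagonals_def)
qed

lemma diag_convexD:
  "diag_convex S \<Longrightarrow> a \<in> S \<Longrightarrow> b \<in> S \<Longrightarrow> diag a = n \<Longrightarrow> diag b = n
    \<Longrightarrow> fst a \<le> j \<Longrightarrow> j \<le> fst b \<Longrightarrow> (j, n - j) \<in> S"
  unfolding diag_convex_def by (metis cell_by_diag)

lemma diag_convex_filter_diag:
  assumes "diag_convex S"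
  shows "diag_convex {c \<in> S. P (diag c)}"
  unfolding diag_convex_def
proof (intro allI impI)
  fix n i j k :: int
  assume "(i, n - i) \<in> {c \<in> S. P (diag c)}" "(k, n - k) \<in> {c \<in> S. P (diag c)}" "i \<le> j" "j \<le> k"
  moreover from this have "(j, n - j) \<in> S"
    using assms unfolding diag_convex_def by blast
  ultimately show "(j, n - j) \<in> {c \<in> S. P (diag c)}"
    by (simp add: diag_def)
qed

text \<open>
  The staircase \<open>(j, n - j), (j, n - 1 - j), (j + 1, n - (j + 1)), \<dots>\<close>: its cells on
  diagonal \<open>n - 1\<close> lie between \<open>w\<close> and \<open>w'\<close>, since \<open>fst w \<le> fst u\<close> and \<open>fst v - 1 \<le> fst w'\<close>.
\<close>
lemma diag_convex_staircase:
  assumes conv: "diag_convex S"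
    and u: "u \<in> S" "diag u = n" and w: "w \<in> S" "diag w = n - 1" "edge_adj u w"
    and v: "v \<in> S" "diag v = n" and w': "w' \<in> S" "diag w' = n - 1" "edge_adj v w'"
    and j: "fst u \<le> j" "j \<le> fst v"
  shows "reach_in S u (j, n - j)"
proof -
  have "fst w \<le> fst u" "fst v - 1 \<le> fst w'"
    using w u w' v unfolding edge_adj_def diag_def by arith+
  have "j \<le> fst v \<longrightarrow> reach_in S u (j, n - j)"
  proof (induction rule: int_ge_induct[OF j(1)])
    case 1
    show ?case using cell_by_diag[of u] u(2) by (simp add: reach_in_refl)
  next
    case (2 i)
    show ?case
    proof
      assume "i + 1 \<le> fst v"
      have "(i, n - i) \<in> S" "reach_in S u (i, n - i)"
        using diag_convexD[OF conv u(1) v(1) u(2) v(2)] 2 \<open>i + 1 \<le> fst v\<close> by auto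
      moreover have "(i, n - 1 - i) \<in> S"
        using diag_convexD[OF conv w(1) w'(1) w(2) w'(2)] \<open>fst w \<le> fst u\<close>
          \<open>fst v - 1 \<le> fst w'\<close> 2 \<open>i + 1 \<le> fst v\<close> by auto
      moreover have "(i + 1, n - (i + 1)) \<in> S"
        using diag_convexD[OF conv u(1) v(1) u(2) v(2)] 2 \<open>i + 1 \<le> fst v\<close> by auto
      ultimately show "reach_in S u (i + 1, n - (i + 1))"
        using reach_in_step[of S u "(i, n - i)" "(i, n - 1 - i)"]
          reach_in_step[of S u "(i, n - 1 - i)" "(i + 1, n - (i + 1))"]
        by (auto simp: edge_adj_def)
    qed
  qed
  then show ?thesis using j(2) by simp
qed

lemma diag_convex_reach_on_diagonal:
  assumes conv: "diag_convex S"
    and u: "u \<in> S" "diag u = n" "\<exists>w\<in>S. diag w = n - 1 \<and> edge_adj u w"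
    and v: "v \<in> S" "diag v = n" "\<exists>w\<in>S. diag w = n - 1 \<and> edge_adj v w"
  shows "reach_in S u v"
proof -
  have "reach_in S a b"
    if "a \<in> S" "diag a = n" "\<exists>w\<in>S. diag w = n - 1 \<and> edge_adj a w"
      "b \<in> S" "diag b = n" "\<exists>w\<in>S. diag w = n - 1 \<and> edge_adj b w"
      "fst a \<le> fst b" for a b
    using that diag_convex_staircase[OF conv, of a n _ b _ "fst b"] cell_by_diag[of b] by auto
  then show ?thesis
    using u v reach_in_sym by (metis linear)
qed

locale top_diagonal_removed =
  fixes R :: "cell set" and m :: int and Q :: "cell set"
  assumes polyomino: "polyomino R" and convex: "diag_convex R"
    and three_diagonals: "num_diagonals R \<ge> 3"
    and m_def: "m = Max (diag ` R)" and Q_def: "Q = {c \<in> R. diag c \<noteq> m}"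
begin

lemma finite_R: "finite R"
  using polyomino by (simp add: polyomino_def)

lemma diag_le_top: "c \<in> R \<Longrightarrow> diag c \<le> m"
  using m_def finite_R by simp

lemma mem_Q_iff: "c \<in> Q \<longleftrightarrow> c \<in> R \<and> diag c \<le> m - 1"
  unfolding Q_def using diag_le_top[of c] by auto

lemma convex_Q: "diag_convex Q"
  using diag_convex_filter_diag[OF convex, of "\<lambda>d. d \<noteq> m"] Q_def by simp

lemma Q_neighbour_below:
  "c \<in> Q \<Longrightarrow> diag c = m - 1 \<Longrightarrow> w \<in> Q \<Longrightarrow> edge_adj c w \<Longrightarrow> diag w = m - 2"
  using edge_adj_diag mem_Q_iff by fastforce

lemma reached_top_cell_has_neighbour_below:
  assumes "reach_in Q x u" "diag x \<le> m - 2" "diag u = m - 1"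
  shows "\<exists>w\<in>Q. diag w = m - 2 \<and> edge_adj u w"
proof -
  obtain w where w: "w \<in> Q" "u \<in> Q" "edge_adj w u"
    using reach_in_last_step[OF assms(1)] assms by fastforce
  then show ?thesis
    using Q_neighbour_below assms(3) edge_adj_sym by blast
qed

text \<open>
  When the path returns from an excursion to diagonal \<open>m\<close>, its first and last cells on
  diagonal \<open>m - 1\<close> both have neighbours on diagonal \<open>m - 2\<close> and are joined by a staircase.
\<close>
lemma reach_in_Q_along_path:
  assumes x: "x \<in> R" "diag x \<le> m - 2" and "reach_in R x y"
  shows "(y \<in> Q \<and> reach_in Q x y)
    \<or> (m - 1 \<le> diag y \<and> (\<exists>u\<in>Q. diag u = m - 1 \<and> reach_in Q x u))"
  using \<open>reach_in R x y\<close> unfolding reach_in_def[of R]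
proof (induction rule: rtranclp_induct)
  case base
  then show ?case using x mem_Q_iff reach_in_refl by auto
next
  case (step y z)
  have R: "y \<in> R" "z \<in> R" and adj: "edge_adj y z" using step.hyps by auto
  have in_Q: "c \<in> Q" if "c \<in> R" "diag c \<le> m - 1" for c
    using that mem_Q_iff by blast
  have "diag y \<le> m" "diag z \<le> m" using R diag_le_top by auto
  then consider "diag z = m" | "diag z = m - 1" | "diag y = m - 1" "diag z = m - 2"
    | "diag y \<le> m - 2" "diag z \<le> m - 2"
    using edge_adj_diag[OF adj] by linarith
  then show ?case
  proof cases
    case 1
    then have "diag y = m - 1" using edge_adj_diag[OF adj] \<open>diag y \<le> m\<close> by auto
    then show ?thesis using step.IH 1 by auto
  next
    case 2
    then have "z \<in> Q" using in_Q R by simp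
    then show ?thesis using step.IH reach_in_step[of Q x y z] adj 2 by auto
  next
    case 3
    have "y \<in> Q" "z \<in> Q" using in_Q R 3 by auto
    have "reach_in Q x y"
    proof (cases "reach_in Q x y")
      case False
      then obtain u where u: "u \<in> Q" "diag u = m - 1" "reach_in Q x u"
        using step.IH by blast
      have "\<exists>w\<in>Q. diag w = m - 1 - 1 \<and> edge_adj y w"
        using \<open>z \<in> Q\<close> 3 adj by auto
      then have "reach_in Q u y"
        using diag_convex_reach_on_diagonal[OF convex_Q u(1,2)]
          reached_top_cell_has_neighbour_below[OF u(3) x(2) u(2)] \<open>y \<in> Q\<close> 3 by simp
      then show ?thesis using u(3) reach_in_trans by blast
    qed
    then show ?thesis using reach_in_step[of Q x y z] \<open>y \<in> Q\<close> \<open>z \<in> Q\<close> adj by simp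
  next
    case 4
    then have "z \<in> Q" using in_Q R by simp
    then show ?thesis using step.IH reach_in_step[of Q x y z] adj 4 by auto
  qed
qed

lemma low_cells_reach_in_Q:
  assumes "x \<in> R" "diag x \<le> m - 2" "y \<in> R" "diag y \<le> m - 2"
  shows "reach_in Q x y"
proof -
  have "reach_in R x y"
    using polyomino assms unfolding polyomino_def cells_connected_def by blast
  from reach_in_Q_along_path[OF assms(1,2) this] show ?thesis
    using assms(4) by auto
qed

lemma exists_low_cell: "\<exists>x\<in>R. diag x \<le> m - 2"
proof (rule ccontr)
  assume "\<not> ?thesis"
  then have "diag ` R \<subseteq> {m - 1, m}" using diag_le_top by force
  then have "card (diag ` R) \<le> 2"
    using card_mono[of "{m - 1, m}" "diag ` R"] card_insert_le_m1 by fastforce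
  then show False using three_diagonals by (simp add: num_diagonals_def)
qed

definition main_component :: "cell set" where
  "main_component = {c \<in> Q. \<exists>x\<in>R. diag x \<le> m - 2 \<and> reach_in Q x c}"

lemma main_component_eq:
  assumes "x \<in> R" "diag x \<le> m - 2"
  shows "main_component = {c \<in> Q. reach_in Q x c}"
  unfolding main_component_def
  using assms low_cells_reach_in_Q reach_in_trans by blast

lemma is_component_main: "is_component Q main_component"
  using exists_low_cell main_component_eq mem_Q_iff unfolding is_component_def by fastforce

lemma polyomino_main: "polyomino main_component"
proof -
  obtain x where x: "x \<in> R" "diag x \<le> m - 2" using exists_low_cell by blast
  then have "x \<in> main_component"
    using main_component_eq mem_Q_iff reach_in_refl by auto
  moreover have "finite main_component"
    using finite_R by (auto simp: main_component_def mem_Q_iff)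
  ultimately show ?thesis
    unfolding polyomino_def main_component_eq[OF x]
    using cells_connected_component by blast
qed

lemma num_diagonals_main: "num_diagonals main_component \<ge> 2"
proof -
  obtain x where x: "x \<in> R" "diag x \<le> m - 2" using exists_low_cell by blast
  obtain y where y: "y \<in> R" "diag y \<noteq> diag x"
  proof (rule ccontr)
    assume "\<not> thesis"
    then have "diag ` R \<subseteq> {diag x}" using that by auto
    then have "card (diag ` R) \<le> 1" using card_mono[of "{diag x}"] by fastforce
    then show False using three_diagonals by (simp add: num_diagonals_def)
  qed
  have "reach_in R x y"
    using polyomino x y unfolding polyomino_def cells_connected_def by blast
  then obtain w where w: "w \<in> R" "edge_adj x w"
    using reach_in_first_step y by blast
  have "diag w \<noteq> diag x" "diag w \<le> m - 1"
    using edge_adj_diag[OF w(2)] x by auto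
  moreover have "reach_in Q x w"
    using reach_in_step[OF reach_in_refl] x w \<open>diag w \<le> m - 1\<close> mem_Q_iff by auto
  ultimately show ?thesis
    using num_diagonals_ge_2[of main_component x w] polyomino_main main_component_eq[OF x]
      x w reach_in_refl mem_Q_iff by (auto simp: polyomino_def)
qed

lemma component_cases:
  assumes "is_component Q C"
  shows "C = main_component \<or> (\<exists>c. C = {c} \<and> diag c = m - 1)"
proof -
  obtain a where a: "a \<in> Q" "C = {b \<in> Q. reach_in Q a b}"
    using assms unfolding is_component_def by blast
  obtain x where x: "x \<in> R" "diag x \<le> m - 2" using exists_low_cell by blast
  show ?thesis
  proof (cases "reach_in Q x a")
    case True
    then show ?thesis using a component_eq main_component_eq[OF x] by blast
  next
    case False
    have "a \<in> R" "diag a \<le> m - 1" using a(1) mem_Q_iff by auto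
    then have "diag a = m - 1"
      using low_cells_reach_in_Q[OF x \<open>a \<in> R\<close>] False by fastforce
    moreover have "\<not> edge_adj a w" if "w \<in> Q" for w
    proof
      assume "edge_adj a w"
      then have "diag w = m - 2"
        using Q_neighbour_below[OF a(1) \<open>diag a = m - 1\<close> that] by simp
      then have "reach_in Q x w"
        using low_cells_reach_in_Q[OF x] that mem_Q_iff by simp
      then show False
        using reach_in_step[OF _ that a(1) edge_adj_sym[OF \<open>edge_adj a w\<close>]] False by blast
    qed
    ultimately show ?thesis
      using component_of_isolated[OF a(1)] a(2) by blast
  qed
qed

lemma convex_main: "diag_convex main_component"
  unfolding diag_convex_def
proof (intro allI impI)
  fix n i j k
  assume h: "(i, n - i) \<in> main_component" "(k, n - k) \<in> main_component" "i \<le> j" "j \<le> k"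
  obtain x where x: "x \<in> R" "diag x \<le> m - 2" using exists_low_cell by blast
  have i: "(i, n - i) \<in> Q" "reach_in Q x (i, n - i)" and k: "(k, n - k) \<in> Q" "reach_in Q x (k, n - k)"
    using h main_component_eq[OF x] by auto
  have j: "(j, n - j) \<in> Q"
    using convex_Q h(3,4) i(1) k(1) unfolding diag_convex_def by blast
  have "reach_in Q x (j, n - j)"
  proof (cases "n = m - 1")
    case True
    have "diag (i, n - i) = m - 1" "diag (k, n - k) = m - 1"
      using True by (auto simp: diag_def)
    then have "reach_in Q (i, n - i) (j, n - j)"
      using diag_convex_staircase[OF convex_Q i(1) _ _ _ _ k(1), of n _ _ j]
        reached_top_cell_has_neighbour_below[OF i(2) x(2)]
        reached_top_cell_has_neighbour_below[OF k(2) x(2)] h(3,4) True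
      by (auto simp: diag_def)
    then show ?thesis using i(2) reach_in_trans by blast
  next
    case False
    then show ?thesis
      using low_cells_reach_in_Q[OF x] j i(1) mem_Q_iff by (auto simp: diag_def)
  qed
  then show "(j, n - j) \<in> main_component"
    using j main_component_eq[OF x] by simp
qed

end

theorem mainTheorem3:
  fixes R :: "cell set" and m :: int and Q :: "cell set"
  assumes "polyomino R" and "diag_convex R" and "num_diagonals R \<ge> 3"
    and "m = Max (diag ` R)"
    and "Q = {c \<in> R. diag c \<noteq> m}"
  shows "(\<exists>!C. is_component Q C \<and> num_diagonals C \<ge> 2)
    \<and> (\<forall>C. is_component Q C \<and> num_diagonals C \<ge> 2 \<longrightarrow> polyomino C \<and> diag_convex C)
    \<and> (\<forall>C. is_component Q C \<and> \<not> num_diagonals C \<ge> 2 \<longrightarrow> (\<exists>c. C = {c} \<and> diag c = m - 1))"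
proof -
  interpret top_diagonal_removed R m Q
    using assms by unfold_locales
  have singleton: "\<not> num_diagonals {c} \<ge> 2" for c
    by (simp add: num_diagonals_singleton)
  show ?thesis
    using component_cases is_component_main num_diagonals_main polyomino_main convex_main
      singleton by blast
qed

end
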